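(* Let $A,B$ be finite-dimensional systems, $\{|j\rangle\}_{j=0}^{|A|-1}$ an orthonormal basis of $A$, and $U_0,\dots,U_{|A|-1}$ unitary operators on $B$. Let $\mathcal C_U\in\mathrm{Ch}(AB,AB)$ be the controlled-unitary channel $\mathcal C_U(X)=C_UXC_U^\dagger$ with $C_U=\sum_j|j\rangle\langle j|_A\otimes U_j$. Then \[ S^\downarrow_\infty(R_AA|R_BB)_{\Phi^{\mathcal C_U}}=-\log\dim\mathrm{span}\{|U_j\rangle\!\rangle\}_j, \] where $|U\rangle\!\rangle:=\sum_i(\mathbb 1_{R_B}\otimes U)|ii\rangle_{R_BB}$ is the vectorization of $U$.
   Context: $\log$ base 2. Maximally entangled state $\Phi_{RX}:=\frac1{|X|}\sum_{i,j}|ii\rangle\langle jj|$; Choi state of a channel $\mathcal N$ from $A'B'$ to $AB$ (here $A'=A$, $B'=B$): $\Phi^{\mathcal N}_{R_AAR_BB}:=(\mathrm{id}_{R_AR_B}\otimes\mathcal N)(\Phi_{R_AA'}\otimes\Phi_{R_BB'})$, $R_A\simeq A'$, $R_B\simeq B'$. $D_\infty(\rho\|\sigma):=\log\inf\{\lambda\ge0:\rho\le\lambda\sigma\}$ and for a state $\rho_{XY}$, $S^\downarrow_\infty(X|Y)_\rho:=-D_\infty(\rho_{XY}\|\mathbb 1_X\otimes\rho_Y)$. *)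

theory Defs
  imports Complex_Main "HOL-Library.Function_Algebras"
begin

text \<open>Finite-dimensional quantum systems are modelled by finite index types:
 a system with orthonormal computational basis indexed by the finite type 'i
 has Hilbert space 'i => complex, and operators are matrices 'i => 'i => complex.\<close>

type_synonym 'i qop = "'i \<Rightarrow> 'i \<Rightarrow> complex"

definition idop :: "'i qop" where
  "idop = (\<lambda>x y. if x = y then 1 else 0)"

definition mmult :: "('i::finite) qop \<Rightarrow> 'i qop \<Rightarrow> 'i qop" where
  "mmult M N = (\<lambda>x y. \<Sum>z\<in>UNIV. M x z * N z y)"

definition adj :: "'i qop \<Rightarrow> 'i qop" where
  "adj M = (\<lambda>x y. cnj (M y x))"

definition unitary_op :: "('i::finite) qop \<Rightarrow> bool" where
  "unitary_op U \<longleftrightarrow> mmult (adj U) U = idop \<and> mmult U (adj U) = idop"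

definition psd :: "('i::finite) qop \<Rightarrow> bool" where
  "psd M \<longleftrightarrow> (\<forall>v :: 'i \<Rightarrow> complex.
      let q = (\<Sum>x\<in>UNIV. \<Sum>y\<in>UNIV. cnj (v x) * M x y * v y) in Im q = 0 \<and> 0 \<le> Re q)"

definition op_le :: "('i::finite) qop \<Rightarrow> 'i qop \<Rightarrow> bool" where
  "op_le \<rho> \<sigma> \<longleftrightarrow> psd (\<lambda>x y. \<sigma> x y - \<rho> x y)"

definition tensor :: "'x qop \<Rightarrow> 'y qop \<Rightarrow> ('x \<times> 'y) qop" where
  "tensor M N = (\<lambda>(x1, y1) (x2, y2). M x1 x2 * N y1 y2)"

definition ptrace1 :: "(('x::finite) \<times> 'y) qop \<Rightarrow> 'y qop" where
  "ptrace1 \<rho> = (\<lambda>y y'. \<Sum>x\<in>UNIV. \<rho> (x, y) (x, y'))"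

definition Dmax :: "('i::finite) qop \<Rightarrow> 'i qop \<Rightarrow> real" where
  "Dmax \<rho> \<sigma> = log 2 (Inf {l :: real. 0 \<le> l \<and> op_le \<rho> (\<lambda>x y. complex_of_real l * \<sigma> x y)})"

definition Sdown_inf :: "(('x::finite) \<times> ('y::finite)) qop \<Rightarrow> real" where
  "Sdown_inf \<rho> = - Dmax \<rho> (tensor idop (ptrace1 \<rho>))"

definition maxent :: "(('a::finite) \<times> 'a) qop" where
  "maxent = (\<lambda>(r, x) (r', x'). if r = x \<and> r' = x' then 1 / of_nat (card (UNIV :: 'a set)) else 0)"

text \<open>Choi state of a (linear) map N on operators of AB, as an operator on
 (R_A A)(R_B B), i.e. (id_{R_A R_B} tensor N)(Phi_{R_A A} tensor Phi_{R_B B}).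
 For a linear N, id tensor N acts blockwise: the (r,r') block is mapped by N.\<close>
definition choi :: "(('a::finite \<times> 'b::finite) qop \<Rightarrow> ('a \<times> 'b) qop)
                   \<Rightarrow> (('a \<times> 'a) \<times> ('b \<times> 'b)) qop" where
  "choi N = (\<lambda>((ra, a), (rb, b)) ((ra', a'), (rb', b')).
      N (\<lambda>(a1, b1) (a2, b2). maxent (ra, a1) (ra', a2) * maxent (rb, b1) (rb', b2))
        (a, b) (a', b'))"

definition ctrl_unitary :: "('a::finite \<Rightarrow> 'a \<Rightarrow> complex) \<Rightarrow> ('a \<Rightarrow> ('b::finite) qop) \<Rightarrow> ('a \<times> 'b) qop" where
  "ctrl_unitary e U = (\<lambda>(a, b) (a', b'). \<Sum>j\<in>UNIV. e j a * cnj (e j a') * U j b b')"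

definition conj_channel :: "('i::finite) qop \<Rightarrow> ('i qop \<Rightarrow> 'i qop)" where
  "conj_channel C = (\<lambda>X. mmult (mmult C X) (adj C))"

text \<open>Vectorization |U>> = sum_i (1_{R_B} tensor U)|ii>, a vector on R_B B:
 its (r, b) entry is U b r.\<close>
definition vecop :: "'b qop \<Rightarrow> ('b \<times> 'b \<Rightarrow> complex)" where
  "vecop U = (\<lambda>(r, b). U b r)"

definition cscale :: "complex \<Rightarrow> ('i \<Rightarrow> complex) \<Rightarrow> ('i \<Rightarrow> complex)" where
  "cscale c v = (\<lambda>x. c * v x)"

definition orthonormal_basis :: "('a::finite \<Rightarrow> 'a \<Rightarrow> complex) \<Rightarrow> bool" where
  "orthonormal_basis e \<longleftrightarrow>
     (\<forall>j k. (\<Sum>a\<in>UNIV. cnj (e j a) * e k a) = (if j = k then 1 else 0))"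

end

theory Submission
  imports Defs "HOL-Analysis.L2_Norm"
begin

text \<open>The Choi state of a conjugation channel X \<mapsto> C X C\<dagger> is pure, proportional to the
projector onto the vectorisation of C. For the controlled unitary this vector is
\<Phi> = \<Sum>j. g_j \<otimes> |U_j\<rangle>\<rangle>, where the vectors g_j = |e_j*\<rangle> \<otimes> |e_j\<rangle> on R_A A are orthonormal, so the
marginal \<sigma> on R_B B is proportional to \<Sum>j. |U_j\<rangle>\<rangle>\<langle>\<langle>U_j|. Testing \<rho> \<le> \<lambda> (1 \<otimes> \<sigma>) on a vector v
gives |\<langle>v, \<Phi>\<rangle>|^2 \<le> \<lambda> \<Sum>x. \<parallel>z_x\<parallel>^2, where z_x = (\<langle>\<langle>U_j|v(x, -)\<rangle>)_j and \<langle>v, \<Phi>\<rangle> = \<Sum>x. \<langle>z_x, \<chi>_x\<rangle>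
with \<chi>_x = (g_j x)_j. The z_x range over a subspace of dimension m = dim span {|U_j\<rangle>\<rangle>}
(row rank equals column rank), so by Cauchy-Schwarz against the projections P \<chi>_x the optimal
\<lambda> is \<Sum>x. \<parallel>P \<chi>_x\<parallel>^2, which equals m because the g_j are orthonormal.\<close>

section \<open>Complex coordinate spaces\<close>

interpretation cv: vector_space "cscale :: complex \<Rightarrow> ('i \<Rightarrow> complex) \<Rightarrow> ('i \<Rightarrow> complex)"
  by unfold_locales (auto simp: cscale_def fun_eq_iff algebra_simps)

lemma cscale_apply [simp]: "cscale c v x = c * v x"
  by (simp add: cscale_def)

lemma sum_apply: "(\<Sum>p\<in>A. f p) x = (\<Sum>p\<in>A. f p x)"
  for f :: "'a \<Rightarrow> 'i \<Rightarrow> 'c::comm_monoid_add"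
  by (induction A rule: infinite_finite_induct) auto

lemma sum_UNIV_prod: "(\<Sum>z\<in>UNIV. f z) = (\<Sum>x\<in>UNIV. \<Sum>y\<in>UNIV. f (x, y))"
  for f :: "'x::finite \<times> 'y::finite \<Rightarrow> 'c::comm_monoid_add"
  by (simp add: sum.cartesian_product UNIV_Times_UNIV[symmetric] del: UNIV_Times_UNIV)

lemma cmod_sum_cnj_mult_square_le:
  fixes z w :: "'a \<Rightarrow> complex"
  shows "(cmod (\<Sum>i\<in>A. cnj (z i) * w i))\<^sup>2 \<le> (\<Sum>i\<in>A. (cmod (z i))\<^sup>2) * (\<Sum>i\<in>A. (cmod (w i))\<^sup>2)"
proof -
  have "cmod (\<Sum>i\<in>A. cnj (z i) * w i) \<le> (\<Sum>i\<in>A. \<bar>cmod (z i)\<bar> * \<bar>cmod (w i)\<bar>)"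
    using norm_sum[of "\<lambda>i. cnj (z i) * w i" A] by (simp add: norm_mult)
  also have "\<dots> \<le> L2_set (\<lambda>i. cmod (z i)) A * L2_set (\<lambda>i. cmod (w i)) A"
    by (rule L2_set_mult_ineq)
  finally have "(cmod (\<Sum>i\<in>A. cnj (z i) * w i))\<^sup>2
      \<le> (L2_set (\<lambda>i. cmod (z i)) A * L2_set (\<lambda>i. cmod (w i)) A)\<^sup>2"
    by (rule power_mono) simp
  then show ?thesis
    by (simp add: power_mult_distrib L2_set_def sum_nonneg)
qed

lemma in_span_range_sum_exists:
  fixes f :: "'k::finite \<Rightarrow> 'i \<Rightarrow> complex"
  assumes "s \<in> cv.span (range f)"
  shows "\<exists>c. s = (\<Sum>k\<in>UNIV. cscale (c k) (f k))"
  using assms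
proof (induction rule: cv.span_induct_alt)
  case base
  show ?case
    by (intro exI[of _ "\<lambda>_. 0"]) (simp add: fun_eq_iff sum_apply)
next
  case (step a x y)
  obtain k0 c where "x = f k0" "y = (\<Sum>k\<in>UNIV. cscale (c k) (f k))"
    using step by blast
  moreover have "(\<Sum>k\<in>UNIV. (if k = k0 then a else 0) * f k i) = a * f k0 i" for i
    by (simp add: if_distrib[of "\<lambda>z. z * _"] cong: if_cong)
  ultimately have "cscale a x + y = (\<Sum>k\<in>UNIV. cscale (c k + (if k = k0 then a else 0)) (f k))"
    by (simp add: fun_eq_iff sum_apply sum.distrib distrib_right)
  then show ?case
    by (rule exI[of _ "\<lambda>k. c k + (if k = k0 then a else 0)"])
qed

definition cinner :: "('i::finite \<Rightarrow> complex) \<Rightarrow> ('i \<Rightarrow> complex) \<Rightarrow> complex" where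
  "cinner u v = (\<Sum>i\<in>UNIV. cnj (u i) * v i)"

definition sqnorm :: "('i::finite \<Rightarrow> complex) \<Rightarrow> real" where
  "sqnorm u = (\<Sum>i\<in>UNIV. (cmod (u i))\<^sup>2)"

lemma cinner_zero_left [simp]: "cinner 0 u = 0"
  by (simp add: cinner_def)

lemma cinner_add_left: "cinner (u + w) v = cinner u v + cinner w v"
  by (simp add: cinner_def algebra_simps sum.distrib)

lemma cinner_diff_right: "cinner u (v - w) = cinner u v - cinner u w"
  by (simp add: cinner_def algebra_simps sum_subtractf)

lemma cinner_scale_left: "cinner (cscale c u) v = cnj c * cinner u v"
  by (simp add: cinner_def sum_distrib_left algebra_simps)

lemma cinner_scale_right: "cinner u (cscale c v) = c * cinner u v"
  by (simp add: cinner_def sum_distrib_left algebra_simps)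

lemma cinner_sum_left: "cinner (\<Sum>p\<in>A. f p) v = (\<Sum>p\<in>A. cinner (f p) v)"
  unfolding cinner_def sum_apply cnj_sum sum_distrib_right by (rule sum.swap)

lemma cinner_sum_right: "cinner u (\<Sum>p\<in>A. f p) = (\<Sum>p\<in>A. cinner u (f p))"
  unfolding cinner_def sum_apply sum_distrib_left by (rule sum.swap)

lemma cinner_commute: "cinner v u = cnj (cinner u v)"
  by (simp add: cinner_def mult.commute)

lemma cinner_self: "cinner u u = of_real (sqnorm u)"
  unfolding cinner_def sqnorm_def of_real_sum
  by (intro sum.cong refl) (metis complex_norm_square mult.commute)

lemma sqnorm_pos:
  assumes "u \<noteq> 0"
  shows "0 < sqnorm u"
proof -
  obtain i where "u i \<noteq> 0"
    using assms by (auto simp: fun_eq_iff)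
  then show ?thesis
    unfolding sqnorm_def by (intro sum_pos2[where i = i]) auto
qed

lemma cmod_sum_cinner_square_le:
  "(cmod (\<Sum>x\<in>X. cinner (z x) (w x)))\<^sup>2 \<le> (\<Sum>x\<in>X. sqnorm (z x)) * (\<Sum>x\<in>X. sqnorm (w x))"
  using cmod_sum_cnj_mult_square_le[where z = "\<lambda>(x, j). z x j" and w = "\<lambda>(x, j). w x j"
      and A = "X \<times> UNIV"]
  by (simp add: cinner_def sqnorm_def sum.cartesian_product case_prod_beta)

section \<open>Orthonormal sets and projections\<close>

definition orthonormal_on :: "'k set \<Rightarrow> ('k \<Rightarrow> 'i::finite \<Rightarrow> complex) \<Rightarrow> bool" where
  "orthonormal_on I f \<longleftrightarrow> (\<forall>i\<in>I. \<forall>k\<in>I. cinner (f i) (f k) = (if i = k then 1 else 0))"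

abbreviation orthonormal :: "('i::finite \<Rightarrow> complex) set \<Rightarrow> bool" where
  "orthonormal P \<equiv> orthonormal_on P id"

lemma cinner_sum_orthonormal:
  assumes "finite I" "orthonormal_on I f"
  shows "cinner (\<Sum>i\<in>I. cscale (a i) (f i)) (\<Sum>k\<in>I. cscale (b k) (f k)) = (\<Sum>i\<in>I. cnj (a i) * b i)"
proof -
  have "cinner (\<Sum>i\<in>I. cscale (a i) (f i)) (\<Sum>k\<in>I. cscale (b k) (f k))
      = (\<Sum>k\<in>I. \<Sum>i\<in>I. b k * (cnj (a i) * cinner (f i) (f k)))"
    by (simp add: cinner_sum_left cinner_scale_left cinner_sum_right cinner_scale_right
        sum_distrib_left)
  also have "\<dots> = (\<Sum>k\<in>I. \<Sum>i\<in>I. if i = k then cnj (a k) * b k else 0)"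
    using assms(2) by (intro sum.cong) (auto simp: orthonormal_on_def)
  finally show ?thesis
    using assms(1) by simp
qed

lemma sqnorm_sum_orthonormal:
  assumes "finite I" "orthonormal_on I f"
  shows "sqnorm (\<Sum>i\<in>I. cscale (a i) (f i)) = (\<Sum>i\<in>I. (cmod (a i))\<^sup>2)"
proof -
  have "of_real (sqnorm (\<Sum>i\<in>I. cscale (a i) (f i))) = (\<Sum>i\<in>I. cnj (a i) * a i)"
    by (simp only: cinner_self[symmetric] cinner_sum_orthonormal[OF assms])
  also have "\<dots> = of_real (\<Sum>i\<in>I. (cmod (a i))\<^sup>2)"
    unfolding of_real_sum by (intro sum.cong refl) (metis complex_norm_square mult.commute)
  finally show ?thesis
    by (simp only: of_real_eq_iff)
qed

definition proj :: "('i::finite \<Rightarrow> complex) set \<Rightarrow> ('i \<Rightarrow> complex) \<Rightarrow> ('i \<Rightarrow> complex)" where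
  "proj P w = (\<Sum>p\<in>P. cscale (cinner p w) p)"

lemma proj_in_span: "proj P w \<in> cv.span P"
  unfolding proj_def by (intro cv.span_sum cv.span_scale cv.span_base)

lemma cinner_proj:
  assumes "finite P" "orthonormal P" "q \<in> P"
  shows "cinner q (proj P w) = cinner q w"
proof -
  have "cinner q (proj P w) = (\<Sum>p\<in>P. cinner p w * cinner q p)"
    by (simp add: proj_def cinner_sum_right cinner_scale_right)
  also have "\<dots> = (\<Sum>p\<in>P. if p = q then cinner q w else 0)"
    using assms by (intro sum.cong) (auto simp: orthonormal_on_def)
  finally show ?thesis
    using assms by simp
qed

lemma cinner_span_orthogonal:
  assumes "c \<in> cv.span S" "\<forall>s\<in>S. cinner s u = 0"
  shows "cinner c u = 0"
  using assms(1)
proof (induction rule: cv.span_induct)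
  case base
  show ?case
    unfolding cv.subspace_def by (auto simp: cinner_add_left cinner_scale_left)
next
  case (step x)
  then show ?case
    using assms(2) by auto
qed

lemma cinner_proj_right:
  assumes "finite P" "orthonormal P" "c \<in> cv.span P"
  shows "cinner c (proj P w) = cinner c w"
proof -
  have "cinner c (w - proj P w) = 0"
    using assms by (intro cinner_span_orthogonal[of c P]) (auto simp: cinner_diff_right cinner_proj)
  then show ?thesis
    by (simp add: cinner_diff_right)
qed

lemma sqnorm_proj:
  assumes "finite P" "orthonormal P"
  shows "sqnorm (proj P w) = (\<Sum>p\<in>P. (cmod (cinner p w))\<^sup>2)"
  using sqnorm_sum_orthonormal[OF assms, of "\<lambda>p. cinner p w"] by (simp add: proj_def)

lemma orthonormal_independent:
  assumes "orthonormal P"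
  shows "cv.independent P"
  unfolding cv.independent_explicit_module
proof (intro allI impI)
  fix t u v
  assume t: "finite t" "t \<subseteq> P" "(\<Sum>v\<in>t. cscale (u v) v) = 0" "v \<in> t"
  have "0 = cinner v (\<Sum>w\<in>t. cscale (u w) w)"
    using t by (simp add: cinner_def)
  also have "\<dots> = (\<Sum>w\<in>t. if w = v then u v else 0)"
    using t assms unfolding cinner_sum_right cinner_scale_right
    by (intro sum.cong) (auto simp: orthonormal_on_def subset_iff)
  finally show "u v = 0"
    using t by simp
qed

lemma dim_eq_card_orthonormal:
  assumes "orthonormal P" "cv.span P = cv.span F"
  shows "cv.dim F = card P"
  using cv.dim_span_eq_card_independent[OF orthonormal_independent[OF assms(1)]]
  by (simp add: assms(2))

lemma orthonormal_insert_exists: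
  assumes "finite P" "orthonormal P"
  shows "\<exists>Q. finite Q \<and> orthonormal Q \<and> cv.span Q = cv.span (insert f P)"
proof (cases "f \<in> cv.span P")
  case True
  then show ?thesis
    using assms cv.span_redundant by blast
next
  case False
  define r where "r = f - proj P f"
  define t where "t = sqnorm r"
  define q where "q = cscale (of_real (1 / sqrt t)) r"
  have "r \<noteq> 0"
    using False proj_in_span[of P f] by (auto simp: r_def)
  then have "0 < t"
    by (simp add: t_def sqnorm_pos)
  have "cinner q q = of_real (1 / sqrt t) * of_real (1 / sqrt t) * cinner r r"
    by (simp add: q_def cinner_scale_left cinner_scale_right)
  also have "\<dots> = of_real (1 / sqrt t * (1 / sqrt t) * t)"
    by (simp only: cinner_self t_def of_real_mult)
  also have "\<dots> = 1"
    using \<open>0 < t\<close> by simp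
  finally have "cinner q q = 1" .
  moreover have "cinner p q = 0" if "p \<in> P" for p
    using assms that by (simp add: q_def r_def cinner_scale_right cinner_diff_right cinner_proj)
  moreover from this have "cinner q p = 0" if "p \<in> P" for p
    using that cinner_commute[of q p] by simp
  ultimately have "orthonormal (insert q P)"
    using assms(2) unfolding orthonormal_on_def by auto
  moreover have "cv.span (insert q P) = cv.span (insert f P)"
  proof -
    have proj_in: "proj P f \<in> cv.span (insert x P)" for x
      using cv.span_mono[of P "insert x P"] proj_in_span by blast
    have "f = cscale (of_real (sqrt t)) q + proj P f"
      using \<open>0 < t\<close> by (simp add: q_def r_def fun_eq_iff)
    also have "\<dots> \<in> cv.span (insert q P)"
      by (intro cv.span_add cv.span_scale proj_in cv.span_base) simp
    finally have "f \<in> cv.span (insert q P)" .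
    moreover have "q \<in> cv.span (insert f P)"
      unfolding q_def r_def by (intro cv.span_scale cv.span_diff proj_in cv.span_base) simp
    ultimately show ?thesis
      unfolding cv.span_eq by (auto intro: cv.span_base)
  qed
  ultimately show ?thesis
    using assms(1) by blast
qed

lemma orthonormal_span_exists:
  assumes "finite F"
  shows "\<exists>P. finite P \<and> orthonormal P \<and> cv.span P = cv.span F"
  using assms
proof (induction F rule: finite_induct)
  case empty
  show ?case
    by (intro exI[of _ "{}"]) (auto simp: orthonormal_on_def)
next
  case (insert f F)
  then obtain P where "finite P" "orthonormal P" "cv.span P = cv.span F"
    by blast
  moreover have "cv.span (insert f P) = cv.span (insert f F)"
    using \<open>cv.span P = cv.span F\<close> by (simp add: cv.span_insert)
  ultimately show ?case
    using orthonormal_insert_exists by metis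
qed

section \<open>Row rank and column rank\<close>

text \<open>Column m0 of L is L applied to the projection of the m0-th unit vector onto the span of the
conjugated rows, so all columns lie in the span of L applied to an orthonormal basis of that span.\<close>
lemma dim_columns_le_dim_conj_rows:
  fixes L :: "'n::finite \<Rightarrow> 'm::finite \<Rightarrow> complex"
  shows "cv.dim (range (\<lambda>m n. L n m)) \<le> cv.dim (range (\<lambda>n m. cnj (L n m)))"
proof -
  obtain P where P: "finite P" "orthonormal P" "cv.span P = cv.span (range (\<lambda>n m. cnj (L n m)))"
    using orthonormal_span_exists[of "range (\<lambda>n m. cnj (L n m))"] by auto
  define Lmul where "Lmul p = (\<lambda>n. \<Sum>m\<in>UNIV. L n m * p m)" for p
  have "(\<lambda>n. L n m0) \<in> cv.span (Lmul ` P)" for m0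
  proof -
    define \<delta> where "\<delta> = (\<lambda>m. if m = m0 then 1 else 0 :: complex)"
    have "L n m0 = cinner (\<lambda>m. cnj (L n m)) (proj P \<delta>)" for n
    proof -
      have "cinner (\<lambda>m. cnj (L n m)) (proj P \<delta>) = cinner (\<lambda>m. cnj (L n m)) \<delta>"
        by (rule cinner_proj_right[OF P(1,2)]) (use P(3) in \<open>auto intro: cv.span_base\<close>)
      then show ?thesis
        by (simp add: cinner_def \<delta>_def if_distrib cong: if_cong)
    qed
    also have "cinner (\<lambda>m. cnj (L n m)) (proj P \<delta>) = (\<Sum>p\<in>P. cscale (cinner p \<delta>) (Lmul p)) n" for n
      unfolding proj_def cinner_sum_right cinner_scale_right
      by (simp add: cinner_def Lmul_def sum_apply)
    finally have "(\<lambda>n. L n m0) = (\<Sum>p\<in>P. cscale (cinner p \<delta>) (Lmul p))"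
      by blast
    also have "\<dots> \<in> cv.span (Lmul ` P)"
      by (intro cv.span_sum cv.span_scale cv.span_base) auto
    finally show ?thesis .
  qed
  then have "cv.dim (range (\<lambda>m n. L n m)) \<le> card (Lmul ` P)"
    using P(1) by (intro cv.dim_le_card) auto
  also have "\<dots> \<le> card P"
    using P(1) by (rule card_image_le)
  also have "\<dots> = cv.dim (range (\<lambda>n m. cnj (L n m)))"
    using dim_eq_card_orthonormal[OF P(2,3)] by simp
  finally show ?thesis .
qed

lemma dim_columns_eq_dim_conj_rows:
  fixes L :: "'n::finite \<Rightarrow> 'm::finite \<Rightarrow> complex"
  shows "cv.dim (range (\<lambda>m n. L n m)) = cv.dim (range (\<lambda>n m. cnj (L n m)))"
  using dim_columns_le_dim_conj_rows[of L] dim_columns_le_dim_conj_rows[of "\<lambda>m n. cnj (L n m)"]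
  by simp

section \<open>The optimal constant for a pure state\<close>

lemma sum_sqnorm_proj_orthonormal_columns:
  fixes g :: "'j::finite \<Rightarrow> 'x::finite \<Rightarrow> complex"
  assumes "finite P" "orthonormal P" "orthonormal_on UNIV g"
  shows "(\<Sum>x\<in>UNIV. sqnorm (proj P (\<lambda>j. g j x))) = card P"
proof -
  have "(\<Sum>x\<in>UNIV. (cmod (cinner p (\<lambda>j. g j x)))\<^sup>2) = 1" if "p \<in> P" for p
  proof -
    have "(\<Sum>x\<in>UNIV. (cmod (cinner p (\<lambda>j. g j x)))\<^sup>2)
        = sqnorm (\<Sum>j\<in>UNIV. cscale (cnj (p j)) (g j))"
      by (simp add: sqnorm_def cinner_def sum_apply)
    also have "\<dots> = sqnorm p"
      using sqnorm_sum_orthonormal[OF _ assms(3), of "\<lambda>j. cnj (p j)"] by (simp add: sqnorm_def)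
    also have "\<dots> = 1"
      using assms(2) that cinner_self[of p] by (simp add: orthonormal_on_def)
    finally show ?thesis .
  qed
  then have "(\<Sum>p\<in>P. \<Sum>x\<in>UNIV. (cmod (cinner p (\<lambda>j. g j x)))\<^sup>2) = card P"
    by simp
  then show ?thesis
    using assms(1,2) by (simp add: sqnorm_proj sum.swap[of _ UNIV])
qed

text \<open>The least admissible constant is attained at z x = proj P (\<lambda>j. g j x).\<close>
lemma Inf_sum_cinner_bound_eq_card:
  fixes g :: "'j::finite \<Rightarrow> 'x::finite \<Rightarrow> complex"
  assumes "finite P" "orthonormal P" "orthonormal_on UNIV g"
  shows "Inf {l. 0 \<le> l \<and> (\<forall>z. (\<forall>x. z x \<in> cv.span P) \<longrightarrow>
            (cmod (\<Sum>x\<in>UNIV. cinner (z x) (\<lambda>j. g j x)))\<^sup>2 \<le> l * (\<Sum>x\<in>UNIV. sqnorm (z x)))}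
         = card P"
proof (rule cInf_eq_minimum; clarsimp)
  have total: "(\<Sum>x\<in>UNIV. sqnorm (proj P (\<lambda>j. g j x))) = card P"
    using assms by (rule sum_sqnorm_proj_orthonormal_columns)
  show "(cmod (\<Sum>x\<in>UNIV. cinner (z x) (\<lambda>j. g j x)))\<^sup>2 \<le> card P * (\<Sum>x\<in>UNIV. sqnorm (z x))"
    if "\<forall>x. z x \<in> cv.span P" for z
  proof -
    have "(\<Sum>x\<in>UNIV. cinner (z x) (\<lambda>j. g j x)) = (\<Sum>x\<in>UNIV. cinner (z x) (proj P (\<lambda>j. g j x)))"
      using assms(1,2) that by (simp add: cinner_proj_right)
    then show ?thesis
      using cmod_sum_cinner_square_le[of z "\<lambda>x. proj P (\<lambda>j. g j x)" UNIV] total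
      by (simp add: mult.commute)
  qed
  fix l :: real
  assume l: "0 \<le> l" "\<forall>z. (\<forall>x. z x \<in> cv.span P) \<longrightarrow>
      (cmod (\<Sum>x\<in>UNIV. cinner (z x) (\<lambda>j. g j x)))\<^sup>2 \<le> l * (\<Sum>x\<in>UNIV. sqnorm (z x))"
  have "(\<Sum>x\<in>UNIV. cinner (proj P (\<lambda>j. g j x)) (\<lambda>j. g j x)) = of_real (card P)"
    using assms(1,2) total
    by (simp add: cinner_proj_right[symmetric] proj_in_span cinner_self flip: of_real_sum)
  moreover have "(cmod (\<Sum>x\<in>UNIV. cinner (proj P (\<lambda>j. g j x)) (\<lambda>j. g j x)))\<^sup>2
      \<le> l * (\<Sum>x\<in>UNIV. sqnorm (proj P (\<lambda>j. g j x)))"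
    using spec[OF l(2), of "\<lambda>x. proj P (\<lambda>j. g j x)"] by (simp add: proj_in_span)
  ultimately have "real (card P) * real (card P) \<le> l * real (card P)"
    using total by (simp add: power2_eq_square)
  then show "real (card P) \<le> l"
    using l(1) by (cases "card P = 0") auto
qed

lemma Inf_pure_state_bound_eq_dim:
  fixes g :: "'j::finite \<Rightarrow> 'x::finite \<Rightarrow> complex" and V :: "'j \<Rightarrow> 'y::finite \<Rightarrow> complex"
  assumes "orthonormal_on UNIV g"
  defines "\<Phi> \<equiv> \<lambda>(x, y). \<Sum>j\<in>UNIV. g j x * V j y"
  shows "Inf {l. 0 \<le> l \<and> (\<forall>v. (cmod (cinner v \<Phi>))\<^sup>2
                  \<le> l * (\<Sum>x\<in>UNIV. \<Sum>j\<in>UNIV. (cmod (cinner (V j) (\<lambda>y. v (x, y))))\<^sup>2))}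
         = real (cv.dim (cv.span (range V)))"
proof -
  define r where "r y = (\<lambda>j. cnj (V j y))" for y
  obtain P where P: "finite P" "orthonormal P" "cv.span P = cv.span (range r)"
    using orthonormal_span_exists[of "range r"] by auto
  have "card P = cv.dim (range (\<lambda>y j. cnj (V j y)))"
    using dim_eq_card_orthonormal[OF P(2,3)] by (simp add: r_def[abs_def])
  also have "\<dots> = cv.dim (cv.span (range V))"
    using dim_columns_eq_dim_conj_rows[of "\<lambda>y j. V j y"] by simp
  finally have card_P: "card P = cv.dim (cv.span (range V))" .
  define Z where "Z v x = (\<lambda>j. cinner (V j) (\<lambda>y. v (x, y)))"
    for v :: "'x \<times> 'y \<Rightarrow> complex" and x
  have Z_sum: "Z v x = (\<Sum>y\<in>UNIV. cscale (v (x, y)) (r y))" for v x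
    by (simp add: Z_def r_def cinner_def fun_eq_iff sum_apply mult.commute)
  have range_Z: "range Z = {z. \<forall>x. z x \<in> cv.span P}"
  proof (intro equalityI subsetI)
    fix z :: "'x \<Rightarrow> 'j \<Rightarrow> complex"
    assume "z \<in> range Z"
    then obtain v where "z = Z v"
      by blast
    have "Z v x \<in> cv.span (range r)" for x
      unfolding Z_sum by (intro cv.span_sum cv.span_scale cv.span_base) simp
    then show "z \<in> {z. \<forall>x. z x \<in> cv.span P}"
      using \<open>z = Z v\<close> P(3) by simp
  next
    fix z :: "'x \<Rightarrow> 'j \<Rightarrow> complex"
    assume "z \<in> {z. \<forall>x. z x \<in> cv.span P}"
    then have "\<forall>x. \<exists>c. z x = (\<Sum>y\<in>UNIV. cscale (c y) (r y))"
      unfolding P(3) using in_span_range_sum_exists by blast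
    then obtain c where "\<forall>x. z x = (\<Sum>y\<in>UNIV. cscale (c x y) (r y))"
      by (rule choice[THEN exE])
    then have "z = Z (\<lambda>(x, y). c x y)"
      by (simp add: Z_sum fun_eq_iff)
    then show "z \<in> range Z"
      by blast
  qed
  have "cinner v \<Phi> = (\<Sum>x\<in>UNIV. cinner (Z v x) (\<lambda>j. g j x))" for v
  proof -
    have "cinner v \<Phi> = (\<Sum>x\<in>UNIV. \<Sum>y\<in>UNIV. \<Sum>j\<in>UNIV. cnj (v (x, y)) * (g j x * V j y))"
      by (simp add: cinner_def \<Phi>_def sum_UNIV_prod sum_distrib_left)
    also have "\<dots> = (\<Sum>x\<in>UNIV. \<Sum>j\<in>UNIV. \<Sum>y\<in>UNIV. cnj (v (x, y)) * (g j x * V j y))"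
      by (intro sum.cong refl sum.swap)
    also have "\<dots> = (\<Sum>x\<in>UNIV. cinner (Z v x) (\<lambda>j. g j x))"
      by (simp add: cinner_def Z_def sum_distrib_left sum_distrib_right algebra_simps)
    finally show ?thesis .
  qed
  moreover have "(\<Sum>x\<in>UNIV. \<Sum>j\<in>UNIV. (cmod (cinner (V j) (\<lambda>y. v (x, y))))\<^sup>2)
      = (\<Sum>x\<in>UNIV. sqnorm (Z v x))" for v
    by (simp add: Z_def sqnorm_def)
  ultimately have "(\<forall>v. (cmod (cinner v \<Phi>))\<^sup>2
        \<le> l * (\<Sum>x\<in>UNIV. \<Sum>j\<in>UNIV. (cmod (cinner (V j) (\<lambda>y. v (x, y))))\<^sup>2))
      \<longleftrightarrow> (\<forall>z\<in>range Z. (cmod (\<Sum>x\<in>UNIV. cinner (z x) (\<lambda>j. g j x)))\<^sup>2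
        \<le> l * (\<Sum>x\<in>UNIV. sqnorm (z x)))" for l
    by simp
  then show ?thesis
    using Inf_sum_cinner_bound_eq_card[OF P(1,2) assms(1)] by (simp add: range_Z card_P)
qed

section \<open>Quadratic forms and the Loewner order\<close>

definition qform :: "('i::finite) qop \<Rightarrow> ('i \<Rightarrow> complex) \<Rightarrow> complex" where
  "qform M v = (\<Sum>x\<in>UNIV. \<Sum>y\<in>UNIV. cnj (v x) * M x y * v y)"

lemma op_le_iff_qform:
  "op_le \<rho> \<sigma> \<longleftrightarrow> (\<forall>v. Im (qform (\<lambda>x y. \<sigma> x y - \<rho> x y) v) = 0
                     \<and> 0 \<le> Re (qform (\<lambda>x y. \<sigma> x y - \<rho> x y) v))"
  by (simp add: op_le_def psd_def qform_def)

lemma qform_diff: "qform (\<lambda>x y. M x y - N x y) v = qform M v - qform N v"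
  by (simp add: qform_def algebra_simps sum_subtractf)

lemma qform_scale: "qform (\<lambda>x y. a * M x y) v = a * qform M v"
  by (simp add: qform_def sum_distrib_left algebra_simps)

lemma qform_sum: "qform (\<lambda>x y. \<Sum>j\<in>J. M j x y) v = (\<Sum>j\<in>J. qform (M j) v)"
  by (induction J rule: infinite_finite_induct)
    (simp_all add: qform_def sum.distrib algebra_simps)

lemma qform_outer: "qform (\<lambda>x y. \<Phi> x * cnj (\<Phi> y)) v = of_real ((cmod (cinner v \<Phi>))\<^sup>2)"
  unfolding complex_norm_square by (simp add: qform_def cinner_def sum_product mult_ac)

lemma qform_tensor_idop:
  fixes v :: "'x::finite \<times> 'y::finite \<Rightarrow> complex"
  shows "qform (tensor idop \<sigma>) v = (\<Sum>x\<in>UNIV. qform \<sigma> (\<lambda>y. v (x, y)))"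
proof -
  have "qform (tensor idop \<sigma>) v
      = (\<Sum>x\<in>UNIV. \<Sum>y\<in>UNIV. \<Sum>x'\<in>UNIV. \<Sum>y'\<in>UNIV. cnj (v (x, y)) * (idop x x' * \<sigma> y y') * v (x', y'))"
    by (simp add: qform_def sum_UNIV_prod tensor_def)
  also have "\<dots> = (\<Sum>x\<in>UNIV. \<Sum>y\<in>UNIV. \<Sum>x'\<in>UNIV.
      if x' = x then (\<Sum>y'\<in>UNIV. cnj (v (x, y)) * \<sigma> y y' * v (x, y')) else 0)"
    by (intro sum.cong refl) (auto simp: idop_def)
  finally show ?thesis
    by (simp add: qform_def)
qed

lemma op_le_pure_iff:
  fixes \<Phi> :: "'x::finite \<times> 'y::finite \<Rightarrow> complex" and W :: "'j::finite \<Rightarrow> 'y \<Rightarrow> complex"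
  assumes "0 < c"
  shows "op_le (\<lambda>X X'. of_real c * \<Phi> X * cnj (\<Phi> X'))
           (\<lambda>X X'. of_real l * tensor idop (\<lambda>y y'. of_real c * (\<Sum>j\<in>UNIV. W j y * cnj (W j y'))) X X')
    \<longleftrightarrow> (\<forall>v. (cmod (cinner v \<Phi>))\<^sup>2
              \<le> l * (\<Sum>x\<in>UNIV. \<Sum>j\<in>UNIV. (cmod (cinner (W j) (\<lambda>y. v (x, y))))\<^sup>2))"
proof -
  have sum_outer: "qform (\<lambda>y y'. \<Sum>j\<in>UNIV. W j y * cnj (W j y')) u
      = of_real (\<Sum>j\<in>UNIV. (cmod (cinner (W j) u))\<^sup>2)" for u
    by (simp add: qform_sum qform_outer cinner_commute[of u])
  have tensor_form: "qform (tensor idop (\<lambda>y y'. of_real c * (\<Sum>j\<in>UNIV. W j y * cnj (W j y')))) v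
      = of_real (c * (\<Sum>x\<in>UNIV. \<Sum>j\<in>UNIV. (cmod (cinner (W j) (\<lambda>y. v (x, y))))\<^sup>2))"
    for v :: "'x \<times> 'y \<Rightarrow> complex"
    unfolding qform_tensor_idop qform_scale sum_outer by (simp add: sum_distrib_left)
  have "qform (\<lambda>X X'. of_real l * tensor idop (\<lambda>y y'. of_real c * (\<Sum>j\<in>UNIV. W j y * cnj (W j y'))) X X'
                   - of_real c * \<Phi> X * cnj (\<Phi> X')) v
      = of_real (c * (l * (\<Sum>x\<in>UNIV. \<Sum>j\<in>UNIV. (cmod (cinner (W j) (\<lambda>y. v (x, y))))\<^sup>2)
                     - (cmod (cinner v \<Phi>))\<^sup>2))" for v
    unfolding mult.assoc qform_diff qform_scale qform_outer tensor_form by (simp add: algebra_simps)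
  then show ?thesis
    using assms by (simp add: op_le_iff_qform zero_le_mult_iff)
qed

section \<open>Conditional min-entropy of a pure state\<close>

lemma ptrace1_pure:
  fixes g :: "'j::finite \<Rightarrow> 'x::finite \<Rightarrow> complex" and V :: "'j \<Rightarrow> 'y::finite \<Rightarrow> complex"
  assumes "orthonormal_on UNIV g"
  defines "\<Phi> \<equiv> \<lambda>(x, y). \<Sum>j\<in>UNIV. g j x * V j y"
  shows "ptrace1 (\<lambda>X X'. of_real c * \<Phi> X * cnj (\<Phi> X'))
         = (\<lambda>y y'. of_real c * (\<Sum>j\<in>UNIV. V j y * cnj (V j y')))"
proof (intro ext)
  fix y y'
  have slice: "(\<lambda>x. \<Phi> (x, y)) = (\<Sum>j\<in>UNIV. cscale (V j y) (g j))" for y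
    by (simp add: \<Phi>_def fun_eq_iff sum_apply mult.commute)
  have "ptrace1 (\<lambda>X X'. of_real c * \<Phi> X * cnj (\<Phi> X')) y y'
      = of_real c * cinner (\<lambda>x. \<Phi> (x, y')) (\<lambda>x. \<Phi> (x, y))"
    by (simp add: ptrace1_def cinner_def sum_distrib_left mult_ac)
  also have "\<dots> = of_real c * (\<Sum>j\<in>UNIV. cnj (V j y') * V j y)"
    unfolding slice using assms(1) by (simp add: cinner_sum_orthonormal)
  finally show "ptrace1 (\<lambda>X X'. of_real c * \<Phi> X * cnj (\<Phi> X')) y y'
      = of_real c * (\<Sum>j\<in>UNIV. V j y * cnj (V j y'))"
    by (simp add: mult.commute)
qed

lemma Sdown_inf_pure:
  fixes g :: "'j::finite \<Rightarrow> 'x::finite \<Rightarrow> complex" and V :: "'j \<Rightarrow> 'y::finite \<Rightarrow> complex"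
  assumes "0 < c" "orthonormal_on UNIV g"
  defines "\<Phi> \<equiv> \<lambda>(x, y). \<Sum>j\<in>UNIV. g j x * V j y"
  shows "Sdown_inf (\<lambda>X X'. of_real c * \<Phi> X * cnj (\<Phi> X'))
         = - log 2 (real (cv.dim (cv.span (range V))))"
  unfolding Sdown_inf_def Dmax_def ptrace1_pure[OF assms(2), where V = V and c = c, folded \<Phi>_def]
    op_le_pure_iff[OF assms(1)] Inf_pure_state_bound_eq_dim[OF assms(2), where V = V, folded \<Phi>_def]
  by simp

section \<open>Choi state of the controlled unitary\<close>

definition choi_vec :: "('a \<times> 'b) qop \<Rightarrow> ('a \<times> 'a) \<times> ('b \<times> 'b) \<Rightarrow> complex" where
  "choi_vec C = (\<lambda>((ra, a), (rb, b)). C (a, b) (ra, rb))"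

lemma choi_conj_channel:
  fixes C :: "('a::finite \<times> 'b::finite) qop"
  shows "choi (conj_channel C) = (\<lambda>X X'.
    of_real (1 / (real (card (UNIV :: 'a set)) * real (card (UNIV :: 'b set))))
      * choi_vec C X * cnj (choi_vec C X'))"
proof (intro ext)
  fix X X' :: "('a \<times> 'a) \<times> ('b \<times> 'b)"
  obtain ra a rb b where X: "X = ((ra, a), (rb, b))"
    by (metis prod.exhaust)
  obtain ra' a' rb' b' where X': "X' = ((ra', a'), (rb', b'))"
    by (metis prod.exhaust)
  define k :: complex
    where "k = of_real (1 / (real (card (UNIV :: 'a set)) * real (card (UNIV :: 'b set))))"
  have "(\<lambda>(a1, b1) (a2, b2). maxent (ra, a1) (ra', a2) * maxent (rb, b1) (rb', b2))
      = (\<lambda>w z. if w = (ra, rb) \<and> z = (ra', rb') then k else 0)"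
    by (auto simp: fun_eq_iff maxent_def k_def)
  then have "choi (conj_channel C) X X'
     = (\<Sum>z\<in>UNIV. (\<Sum>w\<in>UNIV. C (a, b) w * (if w = (ra, rb) \<and> z = (ra', rb') then k else 0))
                   * cnj (C (a', b') z))"
    by (simp add: X X' choi_def conj_channel_def mmult_def adj_def)
  also have "\<dots> = (\<Sum>z\<in>UNIV. if z = (ra', rb') then C (a, b) (ra, rb) * k * cnj (C (a', b') z) else 0)"
    by (intro sum.cong refl) (auto simp: if_distrib cong: if_cong)
  finally show "choi (conj_channel C) X X' = k * choi_vec C X * cnj (choi_vec C X')"
    by (simp add: X X' choi_vec_def)
qed

lemma orthonormal_on_conj_tensor_basis:
  assumes "orthonormal_basis e"
  shows "orthonormal_on UNIV (\<lambda>j (ra, a). e j a * cnj (e j ra))"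
  unfolding orthonormal_on_def
proof (intro ballI)
  fix i k
  have "cinner (\<lambda>(ra, a). e i a * cnj (e i ra)) (\<lambda>(ra, a). e k a * cnj (e k ra))
      = (\<Sum>a\<in>UNIV. cnj (e i a) * e k a) * cnj (\<Sum>ra\<in>UNIV. cnj (e i ra) * e k ra)"
    by (simp add: cinner_def sum_UNIV_prod sum_product mult_ac)
  then show "cinner (\<lambda>(ra, a). e i a * cnj (e i ra)) (\<lambda>(ra, a). e k a * cnj (e k ra))
      = (if i = k then 1 else 0)"
    using assms unfolding orthonormal_basis_def by (simp del: cnj_sum)
qed

theorem lemma4:
  fixes e :: "'a::finite \<Rightarrow> 'a \<Rightarrow> complex"
    and U :: "'a \<Rightarrow> ('b::finite) qop"
  assumes "orthonormal_basis e"
    and "\<forall>j. unitary_op (U j)"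
  shows "Sdown_inf (choi (conj_channel (ctrl_unitary e U)))
         = - log 2 (real (vector_space.dim cscale
                            (module.span cscale (range (\<lambda>j. vecop (U j))))))"
proof -
  define g :: "'a \<Rightarrow> 'a \<times> 'a \<Rightarrow> complex" where "g j = (\<lambda>(ra, a). e j a * cnj (e j ra))" for j
  define V where "V j = vecop (U j)" for j
  define c where "c = 1 / (real (card (UNIV :: 'a set)) * real (card (UNIV :: 'b set)))"
  have "0 < c"
    by (simp add: c_def card_gt_0_iff)
  moreover have "orthonormal_on UNIV g"
    unfolding g_def using assms(1) by (rule orthonormal_on_conj_tensor_basis)
  moreover have "choi_vec (ctrl_unitary e U) = (\<lambda>(x, y). \<Sum>j\<in>UNIV. g j x * V j y)"
    by (auto simp: fun_eq_iff choi_vec_def ctrl_unitary_def g_def V_def vecop_def mult.assoc)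
  ultimately show ?thesis
    using Sdown_inf_pure[of c g V] by (simp add: choi_conj_channel c_def V_def)
qed

end
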